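(* Let $\Gamma$ be a totally ordered abelian group, written additively, and let $S=\Gamma_{\geq 0}$ be the submonoid of its nonnegative elements. Let $K$ be any field and let $D=K[x^S]$ be the semigroup algebra of $S$ over $K$. Then the reciprocal complement $R(D)$ is a valuation ring with value group $\Gamma$.
   Context: For an integral domain $D$ with fraction field $F$, the reciprocal complement $R(D)$ is the subring of $F$ generated by all elements $1/d$ with $d\in D\setminus\{0\}$; equivalently, the set of all finite sums $\sum_{i=1}^n 1/d_i$ with $d_i\in D\setminus\{0\}$, $n\ge 0$. *)

theory Defs
  imports "HOL-Library.Poly_Mapping" "HOL-Computational_Algebra.Fraction_Field"
begin

typedef (overloaded) 'g nonneg = "{g :: 'g :: linordered_ab_group_add. 0 \<le> g}"
  by auto

setup_lifting type_definition_nonneg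

instantiation nonneg :: (linordered_ab_group_add) "{comm_monoid_add, minus}"
begin
lift_definition zero_nonneg :: "'a nonneg" is 0 by simp
lift_definition plus_nonneg :: "'a nonneg \<Rightarrow> 'a nonneg \<Rightarrow> 'a nonneg" is "(+)" by simp
lift_definition minus_nonneg :: "'a nonneg \<Rightarrow> 'a nonneg \<Rightarrow> 'a nonneg"
  is "\<lambda>a b. max 0 (a - b)" by simp
instance
proof
  fix a b c :: "'a nonneg"
  show "a + b + c = a + (b + c)" by transfer (simp add: add.assoc)
  show "a + b = b + a" by transfer (simp add: add.commute)
  show "0 + a = a" by transfer simp
qed
end

instantiation nonneg :: (linordered_ab_group_add) linorder
begin
lift_definition less_eq_nonneg :: "'a nonneg \<Rightarrow> 'a nonneg \<Rightarrow> bool" is "(\<le>)" .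
lift_definition less_nonneg :: "'a nonneg \<Rightarrow> 'a nonneg \<Rightarrow> bool" is "(<)" .
instance
proof
  fix x y z :: "'a nonneg"
  show "(x < y) = (x \<le> y \<and> \<not> y \<le> x)" by transfer auto
  show "x \<le> x" by transfer simp
  show "x \<le> y \<Longrightarrow> y \<le> z \<Longrightarrow> x \<le> z" by transfer (rule order_trans)
  show "x \<le> y \<Longrightarrow> y \<le> x \<Longrightarrow> x = y" by transfer (rule antisym)
  show "x \<le> y \<or> y \<le> x" by transfer (rule linear)
qed
end

instance nonneg :: (linordered_ab_group_add) ordered_cancel_comm_monoid_add
proof
  fix a b c :: "'a nonneg"
  show "a \<le> b \<Longrightarrow> c + a \<le> c + b" by transfer simp
  show "a + b - a = b" by transfer simp
  show "a - b - c = a - (b + c)" proof transfer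
    fix a b c :: 'a
    assume "0 \<le> a" "0 \<le> b" "0 \<le> c"
    then show "max 0 (max 0 (a - b) - c) = max 0 (a - (b + c))"
      proof (cases "b \<le> a")
      case False
      have "b \<le> b + c" using \<open>0 \<le> c\<close> by simp
      with False have "\<not> b + c \<le> a" by (meson order_trans)
      with False \<open>0 \<le> c\<close> show ?thesis by (auto simp: max_def algebra_simps)
    qed (auto simp: max_def algebra_simps)
  qed
qed

type_synonym ('g, 'k) semigroup_algebra = "'g nonneg \<Rightarrow>\<^sub>0 'k"

definition reciprocal_complement :: "'a :: idom fract set" where
  "reciprocal_complement =
     {x. \<exists>ds :: 'a list. (\<forall>d\<in>set ds. d \<noteq> 0) \<and>
          x = sum_list (map (\<lambda>d. inverse (Fract d 1)) ds)}"

definition subring_of_field :: "'f :: field set \<Rightarrow> bool" where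
  "subring_of_field V \<longleftrightarrow> 0 \<in> V \<and> 1 \<in> V \<and>
     (\<forall>x\<in>V. \<forall>y\<in>V. x + y \<in> V \<and> x - y \<in> V \<and> x * y \<in> V)"

definition valuation_ring :: "'f :: field set \<Rightarrow> bool" where
  "valuation_ring V \<longleftrightarrow> subring_of_field V \<and>
     (\<forall>x. x \<noteq> 0 \<longrightarrow> x \<in> V \<or> inverse x \<in> V)"

text \<open>Equivalently F^*/V^* \<cong> \<Gamma> as ordered groups.\<close>
definition has_value_group :: "'f :: field set \<Rightarrow> 'g :: linordered_ab_group_add itself \<Rightarrow> bool" where
  "has_value_group V _ \<longleftrightarrow> (\<exists>v :: 'f \<Rightarrow> 'g.
     (\<forall>x y. x \<noteq> 0 \<longrightarrow> y \<noteq> 0 \<longrightarrow> v (x * y) = v x + v y) \<and>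
     v ` {x. x \<noteq> 0} = UNIV \<and>
     (\<forall>x. x \<noteq> 0 \<longrightarrow> (x \<in> V \<longleftrightarrow> 0 \<le> v x)))"

end

theory Submission
  imports Defs
begin

text \<open>For f \<noteq> 0 in D = K[x^S] let deg f be the largest exponent occurring in f. It is additive on
  products and deg (f + g) \<le> max (deg f) (deg g), so v(a/b) = deg b - deg a is a well-defined
  valuation of the fraction field onto \<Gamma>. Since v(1/d) = deg d \<ge> 0, the ultrametric inequality
  puts R(D) inside {v \<ge> 0}. Conversely, x^(deg g)/g \<in> R(D) by induction on the number of terms of
  g: pulling out the lowest monomial, g = x^m (c + x^m' q) with c \<in> K nonzero, and
  x^(deg g)/g = (x^(deg q)/q) (1 - c/(c + x^m' q)), where c/(c + x^m' q) is the reciprocal of an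
  element of D. Multiplying by the elements c/x^d of R(D) and summing gives every a/b with
  deg a \<le> deg b.\<close>

instance nonneg :: (linordered_ab_group_add) canonically_ordered_monoid_add
  by standard (transfer, auto intro: exI[of _ "_ - _"])

lemma reciprocal_complement_induct [consumes 1, case_names zero recip add]:
  assumes "x \<in> (reciprocal_complement :: 'a::idom fract set)"
    and "P 0"
    and "\<And>d. d \<noteq> 0 \<Longrightarrow> P (Fract 1 d)"
    and "\<And>x y. P x \<Longrightarrow> P y \<Longrightarrow> P (x + y)"
  shows "P x"
proof -
  obtain ds :: "'a list" where "\<forall>d\<in>set ds. d \<noteq> 0" "x = (\<Sum>d\<leftarrow>ds. inverse (Fract d 1))"
    using assms(1) unfolding reciprocal_complement_def by blast
  then show ?thesis
    by (induction ds arbitrary: x) (simp_all add: assms(2-4))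
qed

lemma reciprocal_complement_zero: "0 \<in> (reciprocal_complement :: 'a::idom fract set)"
  unfolding reciprocal_complement_def by (auto intro: exI[of _ "[]"])

lemma Fract_one_mem_reciprocal_complement:
  "d \<noteq> 0 \<Longrightarrow> Fract 1 d \<in> (reciprocal_complement :: 'a::idom fract set)"
  unfolding reciprocal_complement_def by (auto intro: exI[of _ "[d]"])

lemma reciprocal_complement_one: "1 \<in> (reciprocal_complement :: 'a::idom fract set)"
  using Fract_one_mem_reciprocal_complement[of 1] by (simp add: One_fract_def)

lemma reciprocal_complement_add:
  assumes "x \<in> (reciprocal_complement :: 'a::idom fract set)" "y \<in> reciprocal_complement"
  shows "x + y \<in> reciprocal_complement"
proof -
  obtain ds es :: "'a list" where
    "\<forall>d\<in>set ds. d \<noteq> 0" "x = (\<Sum>d\<leftarrow>ds. inverse (Fract d 1))"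
    "\<forall>e\<in>set es. e \<noteq> 0" "y = (\<Sum>e\<leftarrow>es. inverse (Fract e 1))"
    using assms unfolding reciprocal_complement_def by blast
  then show ?thesis
    unfolding reciprocal_complement_def by (intro CollectI exI[of _ "ds @ es"]) auto
qed

lemma reciprocal_complement_uminus:
  assumes "x \<in> (reciprocal_complement :: 'a::idom fract set)"
  shows "- x \<in> reciprocal_complement"
  using assms
proof (induction rule: reciprocal_complement_induct)
  case (recip d)
  have "- Fract 1 d = Fract 1 (- d)"
    by (metis minus_fract minus_fract_cancel minus_minus)
  with recip show ?case by (simp add: Fract_one_mem_reciprocal_complement)
next
  case (add x y)
  then show ?case using reciprocal_complement_add[OF add.IH] by simp
qed (simp add: reciprocal_complement_zero)

lemma reciprocal_complement_diff:
  assumes "x \<in> (reciprocal_complement :: 'a::idom fract set)" "y \<in> reciprocal_complement"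
  shows "x - y \<in> reciprocal_complement"
  using reciprocal_complement_add[OF assms(1) reciprocal_complement_uminus[OF assms(2)]] by simp

lemma reciprocal_complement_mult:
  assumes "x \<in> (reciprocal_complement :: 'a::idom fract set)" "y \<in> reciprocal_complement"
  shows "x * y \<in> reciprocal_complement"
  using assms(1)
proof (induction rule: reciprocal_complement_induct)
  case (recip d)
  from assms(2) show ?case
    by (induction rule: reciprocal_complement_induct)
      (simp_all add: recip Fract_one_mem_reciprocal_complement reciprocal_complement_zero
        reciprocal_complement_add distrib_left)
qed (simp_all add: reciprocal_complement_zero reciprocal_complement_add distrib_right)

lemma subring_of_field_reciprocal_complement:
  "subring_of_field (reciprocal_complement :: 'a::idom fract set)"
  unfolding subring_of_field_def
  by (simp add: reciprocal_complement_zero reciprocal_complement_one reciprocal_complement_add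
      reciprocal_complement_diff reciprocal_complement_mult)

text \<open>deg 0 = Max {} is unspecified.\<close>

definition deg :: "('a::linorder \<Rightarrow>\<^sub>0 'b::zero) \<Rightarrow> 'a" where
  "deg f = Max (Poly_Mapping.keys f)"

abbreviation monomial :: "'a \<Rightarrow> 'a \<Rightarrow>\<^sub>0 'b::zero_neq_one" where
  "monomial k \<equiv> Poly_Mapping.single k 1"

lemma single_eq_zero_iff [simp]: "Poly_Mapping.single k c = 0 \<longleftrightarrow> c = 0"
  by (metis lookup_single_eq lookup_zero single_zero)

lemma deg_single [simp]: "c \<noteq> 0 \<Longrightarrow> deg (Poly_Mapping.single k c) = k"
  by (simp add: deg_def)

lemma deg_in_keys: "f \<noteq> 0 \<Longrightarrow> deg f \<in> Poly_Mapping.keys f"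
  unfolding deg_def by (rule Max_in) auto

lemma le_deg: "k \<in> Poly_Mapping.keys f \<Longrightarrow> k \<le> deg f"
  unfolding deg_def by (rule Max_ge) auto

lemma deg_le_iff: "f \<noteq> 0 \<Longrightarrow> deg f \<le> n \<longleftrightarrow> (\<forall>k\<in>Poly_Mapping.keys f. k \<le> n)"
  unfolding deg_def by (subst Max_le_iff) auto

lemma lookup_single_mult:
  fixes p :: "'a::{comm_monoid_add, cancel_ab_semigroup_add} \<Rightarrow>\<^sub>0 'b::comm_semiring_1"
  shows "Poly_Mapping.lookup (Poly_Mapping.single m c * p) (m + q) = c * Poly_Mapping.lookup p q"
  by (simp add: lookup_mult lookup_single when_mult)

lemma keys_single_mult:
  fixes p :: "'a::{comm_monoid_add, cancel_ab_semigroup_add} \<Rightarrow>\<^sub>0 'b::{comm_semiring_1, semiring_no_zero_divisors}"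
  assumes "c \<noteq> 0"
  shows "Poly_Mapping.keys (Poly_Mapping.single m c * p) = (+) m ` Poly_Mapping.keys p"
proof
  show "Poly_Mapping.keys (Poly_Mapping.single m c * p) \<subseteq> (+) m ` Poly_Mapping.keys p"
    using assms keys_mult[of "Poly_Mapping.single m c" p] by auto
  show "(+) m ` Poly_Mapping.keys p \<subseteq> Poly_Mapping.keys (Poly_Mapping.single m c * p)"
    using assms by (auto simp: in_keys_iff lookup_single_mult)
qed

lemma lookup_mult_at_bounds:
  fixes f g :: "'a::{ordered_cancel_comm_monoid_add, linorder} \<Rightarrow>\<^sub>0 'b::comm_semiring_0"
  assumes f: "\<forall>k\<in>Poly_Mapping.keys f. k \<le> a" and g: "\<forall>k\<in>Poly_Mapping.keys g. k \<le> b"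
  shows "Poly_Mapping.lookup (f * g) (a + b) = Poly_Mapping.lookup f a * Poly_Mapping.lookup g b"
proof -
  have "Poly_Mapping.lookup f l * (\<Sum>q. Poly_Mapping.lookup g q when a + b = l + q)
      = (Poly_Mapping.lookup f a * Poly_Mapping.lookup g b when l = a)" for l
  proof (cases "l = a")
    case False
    have "(Poly_Mapping.lookup g q when a + b = l + q) = 0" if "l < a" for q
    proof (cases "q \<in> Poly_Mapping.keys g")
      case True
      then have "l + q < a + b" using g that by (auto intro: add_less_le_mono)
      then show ?thesis by simp
    qed (simp add: in_keys_iff)
    moreover have "l < a" if "Poly_Mapping.lookup f l \<noteq> 0"
      using f that False by (auto simp: in_keys_iff order.not_eq_order_implies_strict)
    ultimately show ?thesis using False by fastforce
  qed (simp add: when_def)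
  then show ?thesis by (simp add: lookup_mult)
qed

lemma deg_mult:
  fixes f g :: "'a::{ordered_cancel_comm_monoid_add, linorder} \<Rightarrow>\<^sub>0 'b::{comm_semiring_0, semiring_no_zero_divisors}"
  assumes "f \<noteq> 0" "g \<noteq> 0"
  shows "deg (f * g) = deg f + deg g"
proof (rule antisym)
  have "f * g \<noteq> 0" using assms by simp
  moreover have "k \<le> deg f + deg g" if "k \<in> Poly_Mapping.keys (f * g)" for k
    using keys_mult[of f g] that by (auto intro: add_mono le_deg)
  ultimately show "deg (f * g) \<le> deg f + deg g" by (simp add: deg_le_iff)
  have "Poly_Mapping.lookup (f * g) (deg f + deg g) \<noteq> 0"
    using assms deg_in_keys by (auto simp: lookup_mult_at_bounds le_deg in_keys_iff)
  then show "deg f + deg g \<le> deg (f * g)" by (simp add: le_deg in_keys_iff)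
qed

lemma deg_add_le:
  assumes "f + g \<noteq> 0"
  shows "deg (f + g) \<le> max (deg f) (deg g)"
proof -
  have "k \<le> max (deg f) (deg g)" if "k \<in> Poly_Mapping.keys (f + g)" for k
    using keys_add[of f g] that by (auto simp: le_max_iff_disj intro: le_deg)
  with assms show ?thesis by (simp add: deg_le_iff)
qed

lemma monomial_dvd_if_keys_ge:
  fixes g :: "'a::{canonically_ordered_monoid_add, cancel_ab_semigroup_add} \<Rightarrow>\<^sub>0 'b::comm_semiring_1"
  assumes "\<forall>k\<in>Poly_Mapping.keys g. m \<le> k"
  obtains g0 where "g = monomial m * g0"
proof
  have inj: "inj ((+) m)" by (simp add: inj_def)
  define g0 where "g0 = Poly_Mapping.map_key ((+) m) g"
  have g0: "Poly_Mapping.lookup g0 q = Poly_Mapping.lookup g (m + q)" for q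
    unfolding g0_def by (simp add: map_key.rep_eq[OF inj])
  show "g = monomial m * g0"
  proof (rule poly_mapping_eqI)
    fix k
    show "Poly_Mapping.lookup g k = Poly_Mapping.lookup (monomial m * g0) k"
    proof (cases "m \<le> k")
      case True
      then obtain d where "k = m + d" by (auto simp: le_iff_add)
      then show ?thesis by (simp add: lookup_single_mult g0)
    next
      case False
      then have "k \<notin> Poly_Mapping.keys (monomial m * g0)"
        using keys_mult[of "monomial m" g0] by (auto simp: le_iff_add)
      with False assms show ?thesis by (auto simp: in_keys_iff)
    qed
  qed
qed

lemma monomial_factorization:
  fixes g :: "'a::{canonically_ordered_monoid_add, ordered_cancel_comm_monoid_add, linorder} \<Rightarrow>\<^sub>0 'k::field"
  assumes "g \<noteq> 0"
  obtains m g0 where "g = monomial m * g0" "0 \<in> Poly_Mapping.keys g0"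
    "card (Poly_Mapping.keys g0) = card (Poly_Mapping.keys g)"
proof -
  define m where "m = Min (Poly_Mapping.keys g)"
  obtain g0 where g: "g = monomial m * g0"
    using monomial_dvd_if_keys_ge[of g m] by (auto simp: m_def)
  have keys: "Poly_Mapping.keys g = (+) m ` Poly_Mapping.keys g0"
    unfolding g by (simp add: keys_single_mult)
  have "m \<in> Poly_Mapping.keys g"
    using assms by (simp add: m_def)
  then have "0 \<in> Poly_Mapping.keys g0"
    unfolding keys by (metis add.right_neutral add_left_imp_eq imageE)
  moreover have "card (Poly_Mapping.keys g0) = card (Poly_Mapping.keys g)"
    unfolding keys by (simp add: card_image)
  ultimately show thesis using g that by blast
qed

lemma Fract_monomial_deg_mult_monomial:
  fixes g :: "'a::{ordered_cancel_comm_monoid_add, linorder} \<Rightarrow>\<^sub>0 'k::field"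
  assumes "g \<noteq> 0"
  shows "Fract (monomial (deg (monomial m * g))) (monomial m * g) = Fract (monomial (deg g)) g"
proof -
  have "deg (monomial m * g) = m + deg g"
    using assms by (simp add: deg_mult)
  with assms show ?thesis by (simp add: eq_fract mult_single ac_simps)
qed

lemma Fract_const_mem_reciprocal_complement:
  fixes g :: "'a::{ordered_cancel_comm_monoid_add, linorder} \<Rightarrow>\<^sub>0 'k::field"
  assumes "c \<noteq> 0" "g \<noteq> 0"
  shows "Fract (Poly_Mapping.single 0 c) g \<in> reciprocal_complement"
proof -
  have nz: "Poly_Mapping.single 0 (inverse c) * g \<noteq> 0"
    using assms by simp
  have "Fract (Poly_Mapping.single 0 c) g = Fract 1 (Poly_Mapping.single 0 (inverse c) * g)"
    using assms nz by (simp add: eq_fract mult_single mult.assoc[symmetric])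
  with nz show ?thesis
    by (simp add: Fract_one_mem_reciprocal_complement)
qed

lemma Fract_monomial_deg_eq:
  fixes g q :: "'a::{ordered_cancel_comm_monoid_add, linorder} \<Rightarrow>\<^sub>0 'k::field"
  assumes "g \<noteq> 0" "q \<noteq> 0" "g = Poly_Mapping.single 0 c + monomial m * q" "deg g = m + deg q"
  shows "Fract (monomial (deg g)) g = Fract (monomial (deg q)) q * (1 - Fract (Poly_Mapping.single 0 c) g)"
proof -
  have "1 - Fract (Poly_Mapping.single 0 c) g = Fract (monomial m * q) g"
    using assms(1,3) by (simp add: One_fract_def eq_fract algebra_simps)
  also have "Fract (monomial (deg q)) q * \<dots> = Fract (monomial (deg g)) g"
    using assms(1,2,4) by (simp add: eq_fract mult_single ac_simps)
  finally show ?thesis ..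
qed

lemma Fract_monomial_deg_mem_reciprocal_complement:
  fixes g :: "'a::{canonically_ordered_monoid_add, ordered_cancel_comm_monoid_add, linorder} \<Rightarrow>\<^sub>0 'k::field"
  assumes "g \<noteq> 0"
  shows "Fract (monomial (deg g)) g \<in> reciprocal_complement"
  using assms
proof (induction "card (Poly_Mapping.keys g)" arbitrary: g rule: less_induct)
  case less
  obtain m g0 where g: "g = monomial m * g0" and "0 \<in> Poly_Mapping.keys g0"
    and card_g0: "card (Poly_Mapping.keys g0) = card (Poly_Mapping.keys g)"
    using monomial_factorization[OF less.prems] by blast
  have "g0 \<noteq> 0" using less.prems g by auto
  define c where "c = Poly_Mapping.lookup g0 0"
  define h where "h = g0 - Poly_Mapping.single 0 c"
  have "c \<noteq> 0" using \<open>0 \<in> Poly_Mapping.keys g0\<close> by (simp add: c_def in_keys_iff)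
  have keys_g0: "Poly_Mapping.keys g0 = insert 0 (Poly_Mapping.keys h)" "0 \<notin> Poly_Mapping.keys h"
    using \<open>0 \<in> Poly_Mapping.keys g0\<close>
    by (auto simp: h_def c_def in_keys_iff lookup_minus lookup_single when_def split: if_splits)
  have "Fract (monomial (deg g0)) g0 \<in> reciprocal_complement"
  proof (cases "h = 0")
    case True
    then have "g0 = Poly_Mapping.single 0 c" by (simp add: h_def)
    with \<open>c \<noteq> 0\<close> show ?thesis
      by (simp add: Fract_one_mem_reciprocal_complement)
  next
    case False
    obtain m' q where h: "h = monomial m' * q"
      and card_q: "card (Poly_Mapping.keys q) = card (Poly_Mapping.keys h)"
      using monomial_factorization[OF False] by blast
    have "q \<noteq> 0" using False h by auto
    have "card (Poly_Mapping.keys h) < card (Poly_Mapping.keys g)"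
      using keys_g0 card_g0 by simp
    then have IH: "Fract (monomial (deg q)) q \<in> reciprocal_complement"
      using less.hyps \<open>q \<noteq> 0\<close> card_q by simp
    have "deg g0 = deg h"
      using False keys_g0 by (simp add: deg_def Max_insert max_absorb2)
    then have deg_g0: "deg g0 = m' + deg q"
      using \<open>q \<noteq> 0\<close> by (simp add: h deg_mult)
    have "g0 = Poly_Mapping.single 0 c + monomial m' * q"
      by (simp add: h_def flip: h)
    then have "Fract (monomial (deg g0)) g0
        = Fract (monomial (deg q)) q * (1 - Fract (Poly_Mapping.single 0 c) g0)"
      by (rule Fract_monomial_deg_eq[OF \<open>g0 \<noteq> 0\<close> \<open>q \<noteq> 0\<close> _ deg_g0])
    with IH show ?thesis
      by (simp add: reciprocal_complement_mult reciprocal_complement_diff reciprocal_complement_one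
          Fract_const_mem_reciprocal_complement \<open>c \<noteq> 0\<close> \<open>g0 \<noteq> 0\<close>)
  qed
  then show ?case
    using \<open>g0 \<noteq> 0\<close> by (simp add: g Fract_monomial_deg_mult_monomial)
qed

lemma poly_mapping_sum_single: "(\<Sum>k\<in>Poly_Mapping.keys f. Poly_Mapping.single k (Poly_Mapping.lookup f k)) = f"
  by (rule poly_mapping_eqI) (simp add: lookup_sum lookup_single when_def in_keys_iff)

lemma Fract_add_left: "b \<noteq> 0 \<Longrightarrow> Fract (x + y) b = Fract x b + Fract y b"
  by (simp add: eq_fract algebra_simps)

lemma Fract_sum: "b \<noteq> 0 \<Longrightarrow> Fract (\<Sum>k\<in>A. f k) b = (\<Sum>k\<in>A. Fract (f k) b)"
  by (induction A rule: infinite_finite_induct) (simp_all add: fract_collapse Fract_add_left)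

lemma reciprocal_complement_sum:
  "(\<And>k. k \<in> A \<Longrightarrow> f k \<in> reciprocal_complement) \<Longrightarrow> (\<Sum>k\<in>A. f k) \<in> reciprocal_complement"
  by (induction A rule: infinite_finite_induct)
    (simp_all add: reciprocal_complement_zero reciprocal_complement_add)

lemma Fract_single_mem_reciprocal_complement:
  fixes b :: "'a::{canonically_ordered_monoid_add, ordered_cancel_comm_monoid_add, linorder} \<Rightarrow>\<^sub>0 'k::field"
  assumes "b \<noteq> 0" "k \<le> deg b"
  shows "Fract (Poly_Mapping.single k c) b \<in> reciprocal_complement"
proof (cases "c = 0")
  case True
  then show ?thesis by (simp add: fract_collapse reciprocal_complement_zero)
next
  case False
  obtain d where d: "deg b = k + d" using assms(2) by (auto simp: le_iff_add)
  have "Fract (Poly_Mapping.single k c) b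
      = Fract (monomial (deg b)) b * Fract (Poly_Mapping.single 0 c) (monomial d)"
    using assms(1) by (simp add: eq_fract mult_single d ac_simps)
  also have "\<dots> \<in> reciprocal_complement"
    by (intro reciprocal_complement_mult Fract_monomial_deg_mem_reciprocal_complement
        Fract_const_mem_reciprocal_complement) (simp_all add: assms(1) False)
  finally show ?thesis .
qed

lemma Fract_mem_reciprocal_complement_if_deg_le:
  fixes a b :: "'a::{canonically_ordered_monoid_add, ordered_cancel_comm_monoid_add, linorder} \<Rightarrow>\<^sub>0 'k::field"
  assumes "a \<noteq> 0" "b \<noteq> 0" "deg a \<le> deg b"
  shows "Fract a b \<in> reciprocal_complement"
proof -
  have "Fract a b = (\<Sum>k\<in>Poly_Mapping.keys a. Fract (Poly_Mapping.single k (Poly_Mapping.lookup a k)) b)"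
    using assms(2) by (simp add: poly_mapping_sum_single flip: Fract_sum)
  also have "\<dots> \<in> reciprocal_complement"
    using assms by (intro reciprocal_complement_sum Fract_single_mem_reciprocal_complement)
      (auto intro: order_trans le_deg)
  finally show ?thesis .
qed

lemma deg_le_if_Fract_eq_add:
  fixes a b :: "'a::{canonically_ordered_monoid_add, ordered_cancel_comm_monoid_add, linorder} \<Rightarrow>\<^sub>0 'k::field"
  assumes "a \<noteq> 0" "b \<noteq> 0" "Fract a b = Fract a1 b1 + Fract a2 b2"
    and "a1 \<noteq> 0" "b1 \<noteq> 0" "deg a1 \<le> deg b1"
    and "a2 \<noteq> 0" "b2 \<noteq> 0" "deg a2 \<le> deg b2"
  shows "deg a \<le> deg b"
proof -
  define n where "n = a1 * b2 + a2 * b1"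
  have eq: "a * (b1 * b2) = n * b"
    using assms by (simp add: n_def eq_fract)
  then have "n \<noteq> 0" using assms by auto
  have "deg n \<le> max (deg (a1 * b2)) (deg (a2 * b1))"
    unfolding n_def by (rule deg_add_le) (use \<open>n \<noteq> 0\<close> n_def in simp)
  also have "\<dots> \<le> deg b1 + deg b2"
  proof -
    have "deg (a1 * b2) \<le> deg b1 + deg b2" "deg (a2 * b1) \<le> deg b2 + deg b1"
      using assms by (simp_all add: deg_mult add_right_mono)
    then show ?thesis by (simp add: add.commute)
  qed
  finally have deg_n: "deg n \<le> deg b1 + deg b2" .
  have "deg a + (deg b1 + deg b2) = deg n + deg b"
    using arg_cong[OF eq, of deg] assms \<open>n \<noteq> 0\<close> by (simp add: deg_mult)
  also have "\<dots> \<le> deg b + (deg b1 + deg b2)"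
    using add_right_mono[OF deg_n, of "deg b"] by (simp add: add.commute)
  finally show ?thesis
    using add_strict_right_mono[of "deg b" "deg a" "deg b1 + deg b2"] by (auto simp: not_le[symmetric])
qed

lemma deg_le_if_Fract_mem_reciprocal_complement:
  fixes a b :: "'a::{canonically_ordered_monoid_add, ordered_cancel_comm_monoid_add, linorder} \<Rightarrow>\<^sub>0 'k::field"
  assumes "Fract a b \<in> reciprocal_complement" "a \<noteq> 0" "b \<noteq> 0"
  shows "deg a \<le> deg b"
proof -
  \<comment> \<open>Quantified over all representations of x: the sum step yields its own representation.\<close>
  have "\<forall>a b. a \<noteq> 0 \<longrightarrow> b \<noteq> 0 \<longrightarrow> x = Fract a b \<longrightarrow> deg a \<le> deg b"
    if "x \<in> reciprocal_complement" for x :: "('a \<Rightarrow>\<^sub>0 'k) fract"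
    using that
  proof (induction rule: reciprocal_complement_induct)
    case zero
    then show ?case by (simp add: Zero_fract_def eq_fract)
  next
    case (recip d)
    show ?case
    proof (intro allI impI)
      fix a b :: "'a \<Rightarrow>\<^sub>0 'k"
      assume "a \<noteq> 0" "b \<noteq> 0" "Fract 1 d = Fract a b"
      then have "deg b = deg a + deg d"
        using recip by (simp add: eq_fract deg_mult)
      then show "deg a \<le> deg b" by (simp add: le_iff_add)
    qed
  next
    case (add x y)
    show ?case
    proof (intro allI impI)
      fix a b :: "'a \<Rightarrow>\<^sub>0 'k"
      assume ab: "a \<noteq> 0" "b \<noteq> 0" "x + y = Fract a b"
      show "deg a \<le> deg b"
      proof (cases x rule: Fract_cases_nonzero)
        case (Fract a1 b1)
        show ?thesis
        proof (cases y rule: Fract_cases_nonzero)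
          case (Fract a2 b2)
          with \<open>x = Fract a1 b1\<close> \<open>b1 \<noteq> 0\<close> \<open>a1 \<noteq> 0\<close> ab add.IH show ?thesis
            by (intro deg_le_if_Fract_eq_add[of a b a1 b1 a2 b2]) auto
        qed (use ab add.IH in simp)
      qed (use ab add.IH in simp)
    qed
  qed
  with assms show ?thesis by blast
qed

lemma Fract_mem_reciprocal_complement_iff:
  fixes a b :: "'a::{canonically_ordered_monoid_add, ordered_cancel_comm_monoid_add, linorder} \<Rightarrow>\<^sub>0 'k::field"
  assumes "a \<noteq> 0" "b \<noteq> 0"
  shows "Fract a b \<in> reciprocal_complement \<longleftrightarrow> deg a \<le> deg b"
  using assms deg_le_if_Fract_mem_reciprocal_complement Fract_mem_reciprocal_complement_if_deg_le
  by blast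

lemma Rep_nonneg_deg_mult:
  fixes a b :: "('g::linordered_ab_group_add, 'k::field) semigroup_algebra"
  shows "a \<noteq> 0 \<Longrightarrow> b \<noteq> 0 \<Longrightarrow> Rep_nonneg (deg (a * b)) = Rep_nonneg (deg a) + Rep_nonneg (deg b)"
  by (simp add: deg_mult plus_nonneg.rep_eq)

lemma Rep_nonneg_deg_diff_cong:
  fixes a b a' b' :: "('g::linordered_ab_group_add, 'k::field) semigroup_algebra"
  assumes "a \<noteq> 0" "b \<noteq> 0" "a' \<noteq> 0" "b' \<noteq> 0" "a * b' = a' * b"
  shows "Rep_nonneg (deg b) - Rep_nonneg (deg a) = Rep_nonneg (deg b') - Rep_nonneg (deg a')"
proof -
  have "Rep_nonneg (deg a) + Rep_nonneg (deg b') = Rep_nonneg (deg a') + Rep_nonneg (deg b)"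
    using arg_cong[OF assms(5), of "\<lambda>p. Rep_nonneg (deg p)"] assms(1-4)
    by (simp add: Rep_nonneg_deg_mult)
  then show ?thesis by (simp add: algebra_simps)
qed

text \<open>The junk value valuation 0 = 0 makes R(D) = {x. 0 \<le> valuation x} hold including x = 0.\<close>

lift_definition valuation :: "('g::linordered_ab_group_add, 'k::field) semigroup_algebra fract \<Rightarrow> 'g"
  is "\<lambda>(a, b). if a = 0 then 0 else Rep_nonneg (deg b) - Rep_nonneg (deg a)"
  by (auto intro: Rep_nonneg_deg_diff_cong)

lemma valuation_Fract:
  "a \<noteq> 0 \<Longrightarrow> b \<noteq> 0 \<Longrightarrow> valuation (Fract a b) = Rep_nonneg (deg b) - Rep_nonneg (deg a)"
  by transfer simp

lemma valuation_zero [simp]: "valuation 0 = 0"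
  by transfer simp

lemma valuation_mult:
  assumes "x \<noteq> 0" "y \<noteq> 0"
  shows "valuation (x * y) = valuation x + valuation y"
proof -
  obtain a b c d where "x = Fract a b" "a \<noteq> 0" "b \<noteq> 0" "y = Fract c d" "c \<noteq> 0" "d \<noteq> 0"
    using assms by (metis Fract_cases_nonzero)
  then show ?thesis
    by (simp add: valuation_Fract Rep_nonneg_deg_mult algebra_simps)
qed

lemma valuation_inverse: "valuation (inverse x) = - valuation x"
proof (cases x rule: Fract_cases_nonzero)
  case (Fract a b)
  then show ?thesis by (simp add: valuation_Fract)
qed simp

lemma valuation_surj:
  "valuation ` {x :: ('g::linordered_ab_group_add, 'k::field) semigroup_algebra fract. x \<noteq> 0} = UNIV"
proof (intro set_eqI iffI)
  fix \<gamma> :: 'g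
  have p: "Rep_nonneg (Abs_nonneg (max (- \<gamma>) 0)) = max (- \<gamma>) 0"
    and q: "Rep_nonneg (Abs_nonneg (max \<gamma> 0)) = max \<gamma> 0"
    by (simp_all add: Abs_nonneg_inverse)
  let ?x = "Fract (monomial (Abs_nonneg (max (- \<gamma>) 0))) (monomial (Abs_nonneg (max \<gamma> 0)))
    :: ('g, 'k) semigroup_algebra fract"
  have "valuation ?x = max \<gamma> 0 - max (- \<gamma>) 0"
    by (simp add: valuation_Fract p q)
  also have "\<dots> = \<gamma>"
    by (cases "0 \<le> \<gamma>") (auto simp: max_def)
  finally have "\<gamma> = valuation ?x" ..
  moreover have "?x \<in> {x. x \<noteq> 0}"
    by (simp add: Zero_fract_def eq_fract)
  ultimately show "\<gamma> \<in> valuation ` {x :: ('g, 'k) semigroup_algebra fract. x \<noteq> 0}"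
    by (rule image_eqI)
qed simp

lemma reciprocal_complement_eq_valuation_nonneg:
  "(reciprocal_complement :: ('g::linordered_ab_group_add, 'k::field) semigroup_algebra fract set)
     = {x. 0 \<le> valuation x}"
proof (intro set_eqI)
  fix x :: "('g, 'k) semigroup_algebra fract"
  show "x \<in> reciprocal_complement \<longleftrightarrow> x \<in> {x. 0 \<le> valuation x}"
  proof (cases x rule: Fract_cases_nonzero)
    case (Fract a b)
    then show ?thesis
      by (simp add: Fract_mem_reciprocal_complement_iff valuation_Fract less_eq_nonneg.rep_eq)
  qed (simp add: reciprocal_complement_zero)
qed

theorem mainTheorem1:
  fixes \<Gamma> :: "'g :: linordered_ab_group_add itself"
    and K :: "'k :: field itself"
  shows "valuation_ring (reciprocal_complement :: ('g, 'k) semigroup_algebra fract set)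
       \<and> has_value_group (reciprocal_complement :: ('g, 'k) semigroup_algebra fract set) \<Gamma>"
proof
  let ?R = "reciprocal_complement :: ('g, 'k) semigroup_algebra fract set"
  have R: "?R = {x. 0 \<le> valuation x}"
    by (rule reciprocal_complement_eq_valuation_nonneg)
  show "valuation_ring ?R"
    unfolding valuation_ring_def
  proof (intro conjI allI impI)
    show "subring_of_field ?R"
      by (rule subring_of_field_reciprocal_complement)
    fix x :: "('g, 'k) semigroup_algebra fract"
    have "0 \<le> valuation x \<or> 0 \<le> valuation (inverse x)"
      by (auto simp: valuation_inverse)
    then show "x \<in> ?R \<or> inverse x \<in> ?R"
      by (simp add: R)
  qed
  show "has_value_group ?R \<Gamma>"
    unfolding has_value_group_def
    by (intro exI[of _ valuation]) (simp add: R valuation_mult valuation_surj)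
qed

end
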